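(* Let $G$ be a finite-horizon two-player zero-sum sequential game with horizon $T$, let $\epsilon>0$ and $\alpha>0$, and let $\rho$ be a reference policy with $\rho(h_\iota)(a)\ge\epsilon$ for every AOH $h_\iota$ and every action $a\in\mathbb A$. Let $\mathfrak J$ be the MiniMaxKL objective with reference policy $\rho$ and regularization parameter $\alpha$, and let $\pi^\ast$ be the equilibrium of $G$ under $\mathfrak J$. Then the (unregularized) exploitability of $\pi^\ast$ satisfies $\text{expl}(\pi^\ast)\le\alpha T|\log\epsilon|$.
   Context: A finite-horizon two-player zero-sum sequential game consists of: players $i\in\{0,1\}$; a finite action set $\mathbb{A}$; a set of histories $\mathbb{H}$, at each of which exactly one player $\iota$ acts; each history $h$ determines each player's action-observation history (AOH) $h_i$ (perfect recall); an initial history distribution; a reward $\mathcal{R}:\mathbb{H}\times\mathbb{A}\to\mathbb{R}$ (player 0 gets $\mathcal R$, player 1 gets $-\mathcal R$); a transition function $\mathcal{T}:\mathbb{H}\times\mathbb{A}\to\Delta(\mathbb{H})$; and a horizon $T$. $h_\iota$ denotes the acting player's AOH at $h$. A policy of $i$ maps its AOHs to $\Delta(\mathbb A)$; a reference policy $\rho$ maps every AOH to a distribution over $\mathbb A$. The MiniMaxKL objective is $\mathfrak{J}(\pi_0,\pi_1)=\mathbb{E}[\sum_{t=0}^{T-1}\mathfrak{R}(H^t,A^t,\pi(H^t_\iota))\mid\pi_0,\pi_1]$ with $\mathfrak R(h,a,\delta)=\mathcal R(h,a)-\alpha\,\mathrm{KL}(\delta,\rho(h_\iota))$ if player 0 acts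 at $h$ and $\mathfrak R(h,a,\delta)=\mathcal R(h,a)+\alpha\,\mathrm{KL}(\delta,\rho(h_\iota))$ if player 1 acts, where $\pi(H^t_\iota)$ is the acting player's action distribution; player 0 maximizes and player 1 minimizes, and an equilibrium is a saddle point of $\mathfrak J$. The unregularized objective is $\mathcal J(\pi_0,\pi_1)=\mathbb{E}[\sum_{t=0}^{T-1}\mathcal R(H^t,A^t)\mid\pi_0,\pi_1]$, and the exploitability of $\pi=(\pi_0,\pi_1)$ is $\text{expl}(\pi)=\frac12\big(-\min_{\pi_1'}\mathcal J(\pi_0,\pi_1')+\max_{\pi_0'}\mathcal J(\pi_0',\pi_1)\big)$. *)

theory Defs
  imports "HOL-Probability.Probability"
begin

text \<open>A finite-horizon two-player zero-sum sequential game.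
  Histories of type 'h, actions of a finite type 'a, action-observation
  histories (AOHs) of type 'o.  Players are the naturals 0 and 1.\<close>

record ('h, 'a, 'o) game =
  g_init    :: "'h pmf"
  g_acting  :: "'h \<Rightarrow> nat"
  g_aoh     :: "nat \<Rightarrow> 'h \<Rightarrow> 'o"
  g_reward  :: "'h \<Rightarrow> 'a \<Rightarrow> real"        \<comment> \<open>reward R (player 0 gets R, player 1 gets -R)\<close>
  g_trans   :: "'h \<Rightarrow> 'a \<Rightarrow> 'h pmf"
  g_horizon :: nat

definition wf_game :: "('h, 'a, 'o) game \<Rightarrow> bool" where
  "wf_game G \<longleftrightarrow> (\<forall>h. g_acting G h \<in> {0, 1})"

type_synonym ('o, 'a) policy = "'o \<Rightarrow> 'a pmf"

definition joint_pol ::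
  "('h, 'a, 'o) game \<Rightarrow> ('o, 'a) policy \<Rightarrow> ('o, 'a) policy \<Rightarrow> 'h \<Rightarrow> 'a pmf" where
  "joint_pol G \<pi>0 \<pi>1 h =
     (if g_acting G h = 0 then \<pi>0 (g_aoh G 0 h) else \<pi>1 (g_aoh G 1 h))"

primrec val_steps ::
  "('h \<Rightarrow> 'a \<Rightarrow> 'h pmf) \<Rightarrow> ('h \<Rightarrow> 'a pmf) \<Rightarrow> ('h \<Rightarrow> 'a \<Rightarrow> real) \<Rightarrow> nat \<Rightarrow> 'h \<Rightarrow> real" where
  "val_steps Tr p r 0 h = 0"
| "val_steps Tr p r (Suc n) h =
     measure_pmf.expectation (p h)
       (\<lambda>a. r h a + measure_pmf.expectation (Tr h a) (val_steps Tr p r n))"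

definition KL :: "'a::finite pmf \<Rightarrow> 'a pmf \<Rightarrow> real" where
  "KL \<delta> \<mu> = (\<Sum>a\<in>UNIV. pmf \<delta> a * ln (pmf \<delta> a / pmf \<mu> a))"

definition J_obj ::
  "('h, 'a::finite, 'o) game \<Rightarrow> ('o, 'a) policy \<Rightarrow> ('o, 'a) policy \<Rightarrow> real" where
  "J_obj G \<pi>0 \<pi>1 =
     measure_pmf.expectation (g_init G)
       (val_steps (g_trans G) (joint_pol G \<pi>0 \<pi>1) (g_reward G) (g_horizon G))"

definition reg_reward ::
  "('h, 'a::finite, 'o) game \<Rightarrow> ('o, 'a) policy \<Rightarrow> real \<Rightarrow> 'h \<Rightarrow> 'a \<Rightarrow> 'a pmf \<Rightarrow> real" where
  "reg_reward G \<rho> \<alpha> h a \<delta> =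
     (if g_acting G h = 0
      then g_reward G h a - \<alpha> * KL \<delta> (\<rho> (g_aoh G (g_acting G h) h))
      else g_reward G h a + \<alpha> * KL \<delta> (\<rho> (g_aoh G (g_acting G h) h)))"

definition MMKL_obj ::
  "('h, 'a::finite, 'o) game \<Rightarrow> ('o, 'a) policy \<Rightarrow> real \<Rightarrow>
     ('o, 'a) policy \<Rightarrow> ('o, 'a) policy \<Rightarrow> real" where
  "MMKL_obj G \<rho> \<alpha> \<pi>0 \<pi>1 =
     measure_pmf.expectation (g_init G)
       (val_steps (g_trans G) (joint_pol G \<pi>0 \<pi>1)
          (\<lambda>h a. reg_reward G \<rho> \<alpha> h a (joint_pol G \<pi>0 \<pi>1 h)) (g_horizon G))"

definition is_saddle ::
  "(('o, 'a) policy \<Rightarrow> ('o, 'a) policy \<Rightarrow> real) \<Rightarrow> ('o, 'a) policy \<Rightarrow> ('o, 'a) policy \<Rightarrow> bool" where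
  "is_saddle F \<pi>0 \<pi>1 \<longleftrightarrow> (\<forall>\<sigma>0 \<sigma>1. F \<sigma>0 \<pi>1 \<le> F \<pi>0 \<pi>1 \<and> F \<pi>0 \<pi>1 \<le> F \<pi>0 \<sigma>1)"

definition expl ::
  "('h, 'a::finite, 'o) game \<Rightarrow> ('o, 'a) policy \<Rightarrow> ('o, 'a) policy \<Rightarrow> real" where
  "expl G \<pi>0 \<pi>1 =
     (- (INF \<sigma>1. J_obj G \<pi>0 \<sigma>1) + (SUP \<sigma>0. J_obj G \<sigma>0 \<pi>1)) / 2"

end

theory Submission
  imports Defs
begin

text \<open>With a reference policy putting mass at least \<epsilon> on every action, every KL term
  lies in [0, |log \<epsilon>|].  Hence the regularized reward differs from the unregularized one
  by at most \<alpha> |log \<epsilon>| per step, and the MiniMaxKL objective differs from the unregularized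
  objective by at most \<alpha> T |log \<epsilon>|, uniformly in the policies.  A saddle point of an
  objective that is uniformly d-close to J has exploitability at most d with respect to J.\<close>

lemma integrable_measure_pmf_bounded:
  fixes f :: "'x \<Rightarrow> real"
  assumes "\<And>x. \<bar>f x\<bar> \<le> B"
  shows "integrable (measure_pmf p) f"
  by (rule measure_pmf.integrable_const_bound[where B = B]) (use assms in auto)

lemma abs_expectation_pmf_le:
  fixes f :: "'x \<Rightarrow> real"
  assumes "\<And>x. \<bar>f x\<bar> \<le> B"
  shows "\<bar>measure_pmf.expectation p f\<bar> \<le> B"
proof -
  have "\<bar>measure_pmf.expectation p f\<bar> \<le> measure_pmf.expectation p (\<lambda>x. \<bar>f x\<bar>)"
    by (rule integral_abs_bound)
  also have "\<dots> \<le> B"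
    using assms integrable_measure_pmf_bounded[of "\<lambda>x. \<bar>f x\<bar>" B]
    by (intro measure_pmf.integral_le_const) auto
  finally show ?thesis .
qed

definition action_value ::
  "('h \<Rightarrow> 'a \<Rightarrow> 'h pmf) \<Rightarrow> ('h \<Rightarrow> 'a pmf) \<Rightarrow> ('h \<Rightarrow> 'a \<Rightarrow> real) \<Rightarrow> nat \<Rightarrow> 'h \<Rightarrow> 'a \<Rightarrow> real" where
  "action_value Tr p r n h a = r h a + measure_pmf.expectation (Tr h a) (val_steps Tr p r n)"

lemma val_steps_Suc_action_value:
  "val_steps Tr p r (Suc n) h = measure_pmf.expectation (p h) (action_value Tr p r n h)"
  by (simp add: action_value_def[abs_def])

lemma abs_action_value_le:
  assumes "\<And>h a. \<bar>r h a\<bar> \<le> M"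
  shows "\<bar>action_value Tr p r n h a\<bar> \<le> real (Suc n) * M"
proof (induction n arbitrary: h a)
  case 0
  then show ?case
    using assms by (simp add: action_value_def val_steps.simps(1)[abs_def])
next
  case (Suc n)
  have "\<bar>val_steps Tr p r (Suc n) h'\<bar> \<le> real (Suc n) * M" for h'
    unfolding val_steps_Suc_action_value by (rule abs_expectation_pmf_le) (rule Suc.IH)
  then have "\<bar>measure_pmf.expectation (Tr h a) (val_steps Tr p r (Suc n))\<bar> \<le> real (Suc n) * M"
    by (rule abs_expectation_pmf_le)
  then show ?case
    using assms[of h a] unfolding action_value_def by (simp add: algebra_simps abs_le_iff)
qed

lemma abs_val_steps_le:
  assumes "\<And>h a. \<bar>r h a\<bar> \<le> M"
  shows "\<bar>val_steps Tr p r n h\<bar> \<le> real n * M"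
proof (cases n)
  case (Suc m)
  have "\<bar>measure_pmf.expectation (p h) (action_value Tr p r m h)\<bar> \<le> real (Suc m) * M"
    by (intro abs_expectation_pmf_le abs_action_value_le assms)
  then show ?thesis
    unfolding Suc val_steps_Suc_action_value .
qed simp

lemma integrable_val_steps:
  assumes "\<And>h a. \<bar>r h a\<bar> \<le> M"
  shows "integrable (measure_pmf q) (val_steps Tr p r n)"
  using abs_val_steps_le[OF assms] by (rule integrable_measure_pmf_bounded)

lemma val_steps_diff:
  assumes "\<And>h a. \<bar>r h a\<bar> \<le> M" and "\<And>h a. \<bar>r' h a\<bar> \<le> M"
  shows "val_steps Tr p r n h - val_steps Tr p r' n h
           = val_steps Tr p (\<lambda>h a. r h a - r' h a) n h"
proof (induction n arbitrary: h)
  case 0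
  then show ?case by simp
next
  case (Suc n)
  have integrable_action_value: "integrable (measure_pmf (p h)) (action_value Tr p r n h)"
    "integrable (measure_pmf (p h)) (action_value Tr p r' n h)"
    by (rule integrable_measure_pmf_bounded, rule abs_action_value_le, rule assms)+
  have "action_value Tr p r n h a - action_value Tr p r' n h a
          = action_value Tr p (\<lambda>h a. r h a - r' h a) n h a" for a
    unfolding action_value_def
    by (simp add: Suc.IH Bochner_Integration.integral_diff[OF
          integrable_val_steps[OF assms(1)] integrable_val_steps[OF assms(2)], symmetric])
  then show ?case
    unfolding val_steps_Suc_action_value
    by (simp add: Bochner_Integration.integral_diff[OF integrable_action_value, symmetric])
qed

text \<open>Positivity of the reference distribution matters: for \<open>pmf \<mu> a = 0\<close> the summand
  degenerates to \<open>pmf \<delta> a * ln 0 = 0\<close>.\<close>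
lemma KL_nonneg:
  fixes \<delta> \<mu> :: "'a::finite pmf"
  assumes "\<And>a. 0 < pmf \<mu> a"
  shows "0 \<le> KL \<delta> \<mu>"
proof -
  have "pmf \<delta> a - pmf \<mu> a \<le> pmf \<delta> a * ln (pmf \<delta> a / pmf \<mu> a)" for a
  proof (cases "pmf \<delta> a = 0")
    case True
    then show ?thesis by simp
  next
    case False
    then have \<delta>_pos: "0 < pmf \<delta> a"
      using pmf_nonneg[of \<delta> a] by linarith
    have "ln (pmf \<mu> a / pmf \<delta> a) \<le> pmf \<mu> a / pmf \<delta> a - 1"
      using \<delta>_pos assms by (intro ln_le_minus_one) simp
    then have "1 - pmf \<mu> a / pmf \<delta> a \<le> ln (pmf \<delta> a / pmf \<mu> a)"
      using \<delta>_pos assms[of a] by (simp add: ln_div)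
    from mult_left_mono[OF this, of "pmf \<delta> a"] show ?thesis
      using \<delta>_pos by (simp add: algebra_simps)
  qed
  then have "(\<Sum>a\<in>UNIV. pmf \<delta> a - pmf \<mu> a) \<le> KL \<delta> \<mu>"
    unfolding KL_def by (intro sum_mono)
  then show ?thesis
    by (simp add: sum_subtractf sum_pmf_eq_1)
qed

lemma KL_le_minus_ln:
  fixes \<delta> \<mu> :: "'a::finite pmf"
  assumes "0 < \<epsilon>" and "\<And>a. \<epsilon> \<le> pmf \<mu> a"
  shows "KL \<delta> \<mu> \<le> - ln \<epsilon>"
proof -
  have "pmf \<delta> a * ln (pmf \<delta> a / pmf \<mu> a) \<le> pmf \<delta> a * - ln \<epsilon>" for a
  proof (cases "pmf \<delta> a = 0")
    case True
    then show ?thesis by simp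
  next
    case False
    then have \<delta>_pos: "0 < pmf \<delta> a"
      using pmf_nonneg[of \<delta> a] by linarith
    have "pmf \<delta> a / pmf \<mu> a \<le> 1 / \<epsilon>"
      using pmf_le_1[of \<delta> a] assms \<delta>_pos by (simp add: frac_le)
    then have "ln (pmf \<delta> a / pmf \<mu> a) \<le> ln (1 / \<epsilon>)"
      using \<delta>_pos assms(1) assms(2)[of a] by simp
    also have "\<dots> = - ln \<epsilon>"
      using assms(1) by (simp add: ln_div)
    finally show ?thesis
      using \<delta>_pos by (intro mult_left_mono) auto
  qed
  then have "KL \<delta> \<mu> \<le> (\<Sum>a\<in>UNIV. pmf \<delta> a * - ln \<epsilon>)"
    unfolding KL_def by (intro sum_mono)
  then show ?thesis
    unfolding sum_distrib_right[symmetric] by (simp add: sum_pmf_eq_1)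
qed

lemma abs_reward_minus_reg_reward_le:
  assumes "wf_game G" and "0 \<le> \<alpha>" and "0 < \<epsilon>"
    and "\<forall>i\<in>{0, 1}. \<forall>h a. \<epsilon> \<le> pmf (\<rho> (g_aoh G i h)) a"
  shows "\<bar>g_reward G h a - reg_reward G \<rho> \<alpha> h a \<delta>\<bar> \<le> \<alpha> * - ln \<epsilon>"
proof -
  let ?\<mu> = "\<rho> (g_aoh G (g_acting G h) h)"
  have "g_acting G h \<in> {0, 1}"
    using assms(1) unfolding wf_game_def by blast
  then have "\<epsilon> \<le> pmf ?\<mu> b" for b
    using assms(4) by blast
  then have "0 \<le> KL \<delta> ?\<mu>" and "KL \<delta> ?\<mu> \<le> - ln \<epsilon>"
    using assms(3) by (auto intro: KL_nonneg KL_le_minus_ln less_le_trans)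
  then have "\<bar>\<alpha> * KL \<delta> ?\<mu>\<bar> \<le> \<alpha> * - ln \<epsilon>"
    using assms(2) mult_left_mono[of "KL \<delta> ?\<mu>" "- ln \<epsilon>" \<alpha>] by (simp add: abs_mult)
  then show ?thesis
    unfolding reg_reward_def by auto
qed

lemma abs_J_obj_minus_MMKL_obj_le:
  assumes "wf_game G" and "\<And>h a. \<bar>g_reward G h a\<bar> \<le> B"
    and "0 \<le> \<alpha>" and "0 < \<epsilon>"
    and "\<forall>i\<in>{0, 1}. \<forall>h a. \<epsilon> \<le> pmf (\<rho> (g_aoh G i h)) a"
  shows "\<bar>J_obj G \<sigma>0 \<sigma>1 - MMKL_obj G \<rho> \<alpha> \<sigma>0 \<sigma>1\<bar> \<le> real (g_horizon G) * (\<alpha> * - ln \<epsilon>)"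
proof -
  define c where "c = \<alpha> * - ln \<epsilon>"
  define T where "T = g_horizon G"
  define p where "p = joint_pol G \<sigma>0 \<sigma>1"
  define r where "r = g_reward G"
  define r' where "r' h a = reg_reward G \<rho> \<alpha> h a (p h)" for h a
  have close: "\<bar>r h a - r' h a\<bar> \<le> c" for h a
    unfolding r_def r'_def c_def using abs_reward_minus_reg_reward_le[OF assms(1,3-5)] .
  have r_bounded: "\<bar>r h a\<bar> \<le> B + c" and r'_bounded: "\<bar>r' h a\<bar> \<le> B + c" for h a
    using assms(2)[of h a] close[of h a] unfolding r_def by (smt (verit))+
  have "J_obj G \<sigma>0 \<sigma>1 - MMKL_obj G \<rho> \<alpha> \<sigma>0 \<sigma>1
          = measure_pmf.expectation (g_init G) (val_steps (g_trans G) p r T)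
            - measure_pmf.expectation (g_init G) (val_steps (g_trans G) p r' T)"
    unfolding J_obj_def MMKL_obj_def p_def r_def r'_def[abs_def] T_def ..
  also have "\<dots> = measure_pmf.expectation (g_init G)
                    (\<lambda>h. val_steps (g_trans G) p r T h - val_steps (g_trans G) p r' T h)"
    by (rule Bochner_Integration.integral_diff[symmetric])
      (rule integrable_val_steps, fact)+
  also have "\<dots> = measure_pmf.expectation (g_init G)
                    (val_steps (g_trans G) p (\<lambda>h a. r h a - r' h a) T)"
    by (simp add: val_steps_diff[OF r_bounded r'_bounded])
  finally show ?thesis
    using abs_expectation_pmf_le[OF abs_val_steps_le[OF close]]
    unfolding c_def T_def by simp
qed

lemma expl_le_if_saddle_of_close_objective:
  assumes "is_saddle F \<pi>0 \<pi>1"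
    and "\<And>\<sigma>0 \<sigma>1. \<bar>J_obj G \<sigma>0 \<sigma>1 - F \<sigma>0 \<sigma>1\<bar> \<le> d"
  shows "expl G \<pi>0 \<pi>1 \<le> d"
proof -
  have "(SUP \<sigma>0. J_obj G \<sigma>0 \<pi>1) \<le> F \<pi>0 \<pi>1 + d"
  proof (rule cSUP_least)
    fix \<sigma>0
    show "J_obj G \<sigma>0 \<pi>1 \<le> F \<pi>0 \<pi>1 + d"
      using assms(1) assms(2)[of \<sigma>0 \<pi>1] unfolding is_saddle_def by (smt (verit))
  qed simp
  moreover have "F \<pi>0 \<pi>1 - d \<le> (INF \<sigma>1. J_obj G \<pi>0 \<sigma>1)"
  proof (rule cINF_greatest)
    fix \<sigma>1
    show "F \<pi>0 \<pi>1 - d \<le> J_obj G \<pi>0 \<sigma>1"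
      using assms(1) assms(2)[of \<pi>0 \<sigma>1] unfolding is_saddle_def by (smt (verit))
  qed simp
  ultimately show ?thesis
    unfolding expl_def by (simp add: field_simps)
qed

theorem proposition5p13:
  fixes G :: "('h, 'a::finite, 'o) game"
    and \<rho> \<pi>0 \<pi>1 :: "('o, 'a) policy"
    and \<epsilon> \<alpha> :: real
  assumes "wf_game G"
    and "\<exists>B. \<forall>h a. \<bar>g_reward G h a\<bar> \<le> B"
    and "\<epsilon> > 0" and "\<alpha> > 0"
    and "\<forall>i\<in>{0, 1}. \<forall>h a. pmf (\<rho> (g_aoh G i h)) a \<ge> \<epsilon>"
    and "is_saddle (MMKL_obj G \<rho> \<alpha>) \<pi>0 \<pi>1"
  shows "expl G \<pi>0 \<pi>1 \<le> \<alpha> * real (g_horizon G) * \<bar>ln \<epsilon>\<bar>"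
proof -
  have "\<epsilon> \<le> pmf (\<rho> (g_aoh G 0 undefined)) undefined"
    using assms(5) by simp
  then have "\<epsilon> \<le> 1"
    using pmf_le_1 by (rule order_trans)
  then have abs_ln_\<epsilon>: "\<bar>ln \<epsilon>\<bar> = - ln \<epsilon>"
    using assms(3) by simp
  obtain B where "\<And>h a. \<bar>g_reward G h a\<bar> \<le> B"
    using assms(2) by blast
  from abs_J_obj_minus_MMKL_obj_le[OF assms(1) this less_imp_le[OF assms(4)] assms(3,5)]
  have "expl G \<pi>0 \<pi>1 \<le> real (g_horizon G) * (\<alpha> * - ln \<epsilon>)"
    by (rule expl_le_if_saddle_of_close_objective[OF assms(6)])
  then show ?thesis
    unfolding abs_ln_\<epsilon> by (simp add: algebra_simps)
qed

end
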